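(* There is a universal constant $c>0$ such that the following holds. Let $P$ be an irreducible, aperiodic transition matrix on a finite state space $G$, reversible with respect to the probability measure $\pi$, with $\lambda$, $\pi_{\min}$, $\pi_{\max}$ as in the context. Then for all $x\neq y$ in $G$, $$\Pr_x[T_y<T_x^+]\ge \frac{c(1-\lambda)\pi_{\min}}{\pi_{\max}}.$$ In other words $u(P)\ge c(1-\lambda)\pi_{\min}/\pi_{\max}$.
   Context: $(X_t)$ is the chain with transition matrix $P$. $\lambda=\max_{j>1}|\lambda_j|$, where $1=\lambda_1>\lambda_2\ge\dots\ge\lambda_n>-1$ are the eigenvalues of $P$. $\pi_{\min}=\min_x\pi(x)$ and $\pi_{\max}=\max_x\pi(x)$. $T_y=\inf\{t\ge0:X_t=y\}$ and $T_x^+=\inf\{t\ge1:X_t=x\}$. $\Pr_x$ is the law of the chain started at $x$. $u(P):=\min_{x\ne y}\Pr_x[T_y<T_x^+]$. *)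

theory Defs
  imports "HOL-Analysis.Analysis" "HOL-Computational_Algebra.Computational_Algebra"
    "HOL-Combinatorics.Permutations"
begin

text \<open>A Markov chain on a finite state space G (a finite set of naturals; every finite
  state space is isomorphic to one) with transition matrix P, stored as a function
  nat => nat => real (values outside G are irrelevant).\<close>

definition stochastic :: "nat set \<Rightarrow> (nat \<Rightarrow> nat \<Rightarrow> real) \<Rightarrow> bool" where
  "stochastic G P \<longleftrightarrow> (\<forall>x\<in>G. \<forall>y\<in>G. P x y \<ge> 0) \<and> (\<forall>x\<in>G. (\<Sum>y\<in>G. P x y) = 1)"

fun mpow :: "nat set \<Rightarrow> (nat \<Rightarrow> nat \<Rightarrow> real) \<Rightarrow> nat \<Rightarrow> nat \<Rightarrow> nat \<Rightarrow> real" where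
  "mpow G P 0 x y = (if x = y then 1 else 0)"
| "mpow G P (Suc n) x y = (\<Sum>z\<in>G. P x z * mpow G P n z y)"

definition irreducible_chain :: "nat set \<Rightarrow> (nat \<Rightarrow> nat \<Rightarrow> real) \<Rightarrow> bool" where
  "irreducible_chain G P \<longleftrightarrow> (\<forall>x\<in>G. \<forall>y\<in>G. \<exists>n. mpow G P n x y > 0)"

definition aperiodic_chain :: "nat set \<Rightarrow> (nat \<Rightarrow> nat \<Rightarrow> real) \<Rightarrow> bool" where
  "aperiodic_chain G P \<longleftrightarrow> (\<forall>x\<in>G. Gcd {n. 0 < n \<and> mpow G P n x x > 0} = (1::nat))"

definition reversible_chain :: "nat set \<Rightarrow> (nat \<Rightarrow> nat \<Rightarrow> real) \<Rightarrow> (nat \<Rightarrow> real) \<Rightarrow> bool" where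
  "reversible_chain G P \<pi> \<longleftrightarrow> (\<forall>x\<in>G. \<pi> x \<ge> 0) \<and> (\<Sum>x\<in>G. \<pi> x) = 1 \<and>
     (\<forall>x\<in>G. \<forall>y\<in>G. \<pi> x * P x y = \<pi> y * P y x)"

definition charpoly :: "nat set \<Rightarrow> (nat \<Rightarrow> nat \<Rightarrow> real) \<Rightarrow> real poly" where
  "charpoly G P = (\<Sum>\<sigma> | \<sigma> permutes G. of_int (sign \<sigma>) *
      (\<Prod>i\<in>G. (if \<sigma> i = i then [:0, 1:] else 0) - [:P i (\<sigma> i):]))"

definition eigenvalues :: "nat set \<Rightarrow> (nat \<Rightarrow> nat \<Rightarrow> real) \<Rightarrow> complex multiset" where
  "eigenvalues G P = proots (map_poly complex_of_real (charpoly G P))"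

text \<open>lambda = max_{j>1} |lambda_j|: drop one copy of the eigenvalue lambda_1 = 1.\<close>
definition slem :: "nat set \<Rightarrow> (nat \<Rightarrow> nat \<Rightarrow> real) \<Rightarrow> real" where
  "slem G P = Max (cmod ` set_mset (eigenvalues G P - {#1#}))"

text \<open>hit_avoid G P x y n z = Pr_z[X_n = y and X_t \<notin> {x,y} for 0 <= t < n].\<close>
fun hit_avoid :: "nat set \<Rightarrow> (nat \<Rightarrow> nat \<Rightarrow> real) \<Rightarrow> nat \<Rightarrow> nat \<Rightarrow> nat \<Rightarrow> nat \<Rightarrow> real" where
  "hit_avoid G P x y 0 z = (if z = y then 1 else 0)"
| "hit_avoid G P x y (Suc n) z =
     (if z = x \<or> z = y then 0 else (\<Sum>w\<in>G. P z w * hit_avoid G P x y n w))"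

text \<open>Pr_x[T_y < T_x^+] = sum over n >= 0 of Pr_x[X_{n+1} = y, X_t \<notin> {x,y} for 1 <= t <= n].\<close>
definition escape_prob :: "nat set \<Rightarrow> (nat \<Rightarrow> nat \<Rightarrow> real) \<Rightarrow> nat \<Rightarrow> nat \<Rightarrow> real" where
  "escape_prob G P x y = (\<Sum>n. \<Sum>w\<in>G. P x w * hit_avoid G P x y n w)"

end

theory Submission
  imports Defs "Jordan_Normal_Form.Char_Poly"
begin

(* Proof idea: the Dirichlet-form argument; the constant is c = 1/2.
   Fix x \<noteq> y and let h(z) = Pr_z[T_y < T_x] be the escape potential, so h(x) = 0, h(y) = 1
   and h is P-harmonic off {x,y}.  For g = 1 - h the Dirichlet form
   E(g) = <g,g>_pi - <g,Pg>_pi reduces to its term at x, which is pi(x) * Pr_x[T_y < T_x^+].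
   Adding a constant to g does not change E, so E(g) = E(f) for the centred f = g - E_pi g, and
   the Poincare inequality (1 - lambda) Var_pi(f) <= E(f) applies.  The variance is at least the
   contribution of x and y, which is at least pi(x) pi(y) / (pi(x) + pi(y)).  Hence
   Pr_x[T_y < T_x^+] >= (1 - lambda) pi(y) / (pi(x) + pi(y)) >= (1 - lambda) pi_min / (2 pi_max). *)

definition Papply :: "nat set \<Rightarrow> (nat \<Rightarrow> nat \<Rightarrow> real) \<Rightarrow> (nat \<Rightarrow> real) \<Rightarrow> nat \<Rightarrow> real" where
  "Papply G P f = (\<lambda>u. \<Sum>w\<in>G. P u w * f w)"

section \<open>Real eigenvalues and the second largest eigenvalue modulus\<close>

lemma permutes_transport:
  assumes "finite A" and "p permutes A" and "bij_betw f A B" and "\<And>x. x \<in> A \<Longrightarrow> f' (f x) = x"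
  shows "(\<lambda>x. if x \<in> B then f (p (f' x)) else x) permutes B"
    and "sign (\<lambda>x. if x \<in> B then f (p (f' x)) else x) = sign p"
proof -
  interpret permutes_bij_finite p A B f f' "\<lambda>x. if x \<in> B then f (p (f' x)) else x"
    by unfold_locales (use assms in auto)
  show "(\<lambda>x. if x \<in> B then f (p (f' x)) else x) permutes B" by (rule permutes_p')
  show "sign (\<lambda>x. if x \<in> B then f (p (f' x)) else x) = sign p" by (rule sign_p')
qed

lemma leibniz_reindex:
  fixes M :: "nat \<Rightarrow> nat \<Rightarrow> 'a :: comm_ring_1" and e :: "nat \<Rightarrow> nat"
  assumes fin: "finite G" and e: "bij_betw e {0..<n} G"
  shows "(\<Sum>\<sigma> | \<sigma> permutes G. of_int (sign \<sigma>) * (\<Prod>i\<in>G. M i (\<sigma> i))) =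
         (\<Sum>p | p permutes {0..<n}. of_int (sign p) * (\<Prod>i = 0..<n. M (e i) (e (p i))))"
proof -
  define e' where "e' = inv_into {0..<n} e"
  have e'e: "\<And>i. i \<in> {0..<n} \<Longrightarrow> e' (e i) = i" and ee': "\<And>x. x \<in> G \<Longrightarrow> e (e' x) = x"
    using e unfolding e'_def by (meson bij_betw_inv_into_left, meson bij_betw_inv_into_right)
  have e'bij: "bij_betw e' G {0..<n}" using e unfolding e'_def by (rule bij_betw_inv_into)
  define to_seg where "to_seg = (\<lambda>\<sigma> x. if x \<in> {0..<n} then e' (\<sigma> (e x)) else x)"
  define to_G where "to_G = (\<lambda>p x. if x \<in> G then e (p (e' x)) else x)"
  have to_seg: "to_seg \<sigma> permutes {0..<n} \<and> sign (to_seg \<sigma>) = sign \<sigma>" if "\<sigma> permutes G" for \<sigma>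
    using permutes_transport[OF fin that e'bij ee'] unfolding to_seg_def by simp
  have to_G: "to_G p permutes G" if "p permutes {0..<n}" for p
    using permutes_transport(1)[OF _ that e e'e] unfolding to_G_def by simp
  show ?thesis
  proof (rule sum.reindex_bij_witness[where i=to_G and j=to_seg])
    fix \<sigma> assume s: "\<sigma> \<in> {\<sigma>. \<sigma> permutes G}"
    hence sG: "\<And>x. x \<in> G \<Longrightarrow> \<sigma> x \<in> G" and sout: "\<And>x. x \<notin> G \<Longrightarrow> \<sigma> x = x"
      by (simp_all add: permutes_in_image permutes_not_in)
    show "to_G (to_seg \<sigma>) = \<sigma>"
      using bij_betw_apply[OF e'bij] by (auto simp: fun_eq_iff to_G_def to_seg_def ee' sG sout)
    show "to_seg \<sigma> \<in> {p. p permutes {0..<n}}" using to_seg s by auto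
    have "(\<Prod>i = 0..<n. M (e i) (e (to_seg \<sigma> i))) = (\<Prod>i = 0..<n. M (e i) (\<sigma> (e i)))"
      using bij_betw_apply[OF e] by (intro prod.cong) (auto simp: to_seg_def ee' sG)
    also have "\<dots> = (\<Prod>i\<in>G. M i (\<sigma> i))"
      using prod.reindex_bij_betw[OF e, of "\<lambda>i. M i (\<sigma> i)"] by simp
    finally show "of_int (sign (to_seg \<sigma>)) * (\<Prod>i = 0..<n. M (e i) (e (to_seg \<sigma> i))) =
        of_int (sign \<sigma>) * (\<Prod>i\<in>G. M i (\<sigma> i))"
      using to_seg s by simp
  next
    fix p assume p: "p \<in> {p. p permutes {0..<n}}"
    hence pG: "\<And>x. x \<in> {0..<n} \<Longrightarrow> p x \<in> {0..<n}" and pout: "\<And>x. x \<notin> {0..<n} \<Longrightarrow> p x = x"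
      by (simp_all add: permutes_in_image permutes_not_in)
    show "to_seg (to_G p) = p"
      using bij_betw_apply[OF e] e'e pG pout by (auto simp: to_G_def to_seg_def fun_eq_iff)
    show "to_G p \<in> {\<sigma>. \<sigma> permutes G}" using to_G p by auto
  qed
qed

lemma charpoly_eq_char_poly:
  assumes fin: "finite G" and e: "bij_betw e {0..<n} G"
  shows "charpoly G P = char_poly (mat n n (\<lambda>(i,j). P (e i) (e j)))"
proof -
  define A where "A = mat n n (\<lambda>(i,j). P (e i) (e j))"
  have A: "A \<in> carrier_mat n n" unfolding A_def by simp
  have entry: "char_poly_matrix A $$ (i, p i) =
      (if e (p i) = e i then [:0, 1:] else 0) - [:P (e i) (e (p i)):]"
    if "p permutes {0..<n}" "i \<in> {0..<n}" for p i
  proof -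
    have "p i \<in> {0..<n}" using that by (simp add: permutes_in_image)
    moreover have "(e (p i) = e i) = (p i = i)"
      using that \<open>p i \<in> {0..<n}\<close> bij_betw_imp_inj_on[OF e] by (auto dest: inj_onD)
    ultimately show ?thesis using that unfolding char_poly_matrix_def A_def by auto
  qed
  have "char_poly A = (\<Sum>p | p permutes {0..<n}.
      of_int (sign p) * (\<Prod>i = 0..<n. char_poly_matrix A $$ (i, p i)))"
    unfolding char_poly_def by (rule det_def') (use A in simp)
  also have "\<dots> = (\<Sum>p | p permutes {0..<n}. of_int (sign p) *
      (\<Prod>i = 0..<n. (if e (p i) = e i then [:0, 1:] else 0) - [:P (e i) (e (p i)):]))"
    using entry by (intro sum.cong refl arg_cong2[where f="(*)"] prod.cong) auto
  also have "\<dots> = charpoly G P"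
    unfolding charpoly_def
    by (rule leibniz_reindex[OF fin e, where M="\<lambda>i j. (if j = i then [:0, 1:] else 0) - [:P i j:]",
          symmetric])
  finally show ?thesis unfolding A_def by simp
qed

lemma real_eigenvalue_le_slem:
  assumes fin: "finite G" and u0: "u0 \<in> G" "a u0 \<noteq> 0"
    and eig: "\<forall>u\<in>G. Papply G P a u = \<mu> * a u" and ne1: "\<mu> \<noteq> 1"
  shows "\<bar>\<mu>\<bar> \<le> slem G P"
proof -
  define n where "n = card G"
  obtain e where e: "bij_betw e {0..<n} G" using ex_bij_betw_nat_finite[OF fin] n_def by auto
  define A where "A = mat n n (\<lambda>(i,j). P (e i) (e j))"
  have A: "A \<in> carrier_mat n n" unfolding A_def by simp
  define v where "v = vec n (\<lambda>i. a (e i))"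
  have v: "v \<in> carrier_vec n" unfolding v_def by simp
  obtain i0 where i0: "i0 < n" "e i0 = u0"
    using e u0(1) by (metis atLeastLessThan_iff bij_betw_iff_bijections)
  have "v \<noteq> 0\<^sub>v n"
    using i0 u0(2) by (auto simp: v_def dest!: arg_cong[where f="\<lambda>w. vec_index w i0"])
  moreover have "A *\<^sub>v v = \<mu> \<cdot>\<^sub>v v"
  proof (rule eq_vecI)
    fix i assume "i < dim_vec (\<mu> \<cdot>\<^sub>v v)"
    hence i: "i < n" using v by simp
    have "(A *\<^sub>v v) $ i = (\<Sum>j = 0..<n. P (e i) (e j) * a (e j))"
      using i unfolding A_def v_def by (simp add: mult_mat_vec_def scalar_prod_def)
    also have "\<dots> = Papply G P a (e i)"
      using sum.reindex_bij_betw[OF e, of "\<lambda>w. P (e i) w * a w"] by (simp add: Papply_def)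
    also have "\<dots> = \<mu> * a (e i)" using eig bij_betw_apply[OF e] i by simp
    finally show "(A *\<^sub>v v) $ i = (\<mu> \<cdot>\<^sub>v v) $ i" using i unfolding v_def by simp
  qed (use v A in simp)
  ultimately have "eigenvalue A \<mu>"
    unfolding eigenvalue_def eigenvector_def using v A by auto
  hence root: "poly (char_poly A) \<mu> = 0" using eigenvalue_root_char_poly[OF A] by simp
  have cp: "charpoly G P = char_poly A" unfolding A_def by (rule charpoly_eq_char_poly[OF fin e])
  have "coeff (map_poly complex_of_real (charpoly G P)) n = 1"
    using degree_monic_char_poly[OF A] cp by (simp add: coeff_map_poly)
  hence "map_poly complex_of_real (charpoly G P) \<noteq> 0" by auto
  moreover have "poly (map_poly complex_of_real (charpoly G P)) (of_real \<mu>) = 0"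
    using root cp by (simp add: of_real_hom.poly_map_poly)
  ultimately have "complex_of_real \<mu> \<in># eigenvalues G P"
    unfolding eigenvalues_def by simp
  hence "complex_of_real \<mu> \<in># eigenvalues G P - {#1#}"
    using ne1 by (simp add: in_diff_count)
  hence "cmod (complex_of_real \<mu>) \<in> cmod ` set_mset (eigenvalues G P - {#1#})" by blast
  hence "cmod (complex_of_real \<mu>) \<le> slem G P" unfolding slem_def by (intro Max_ge) auto
  thus ?thesis by simp
qed


section \<open>Irreducible reversible chains\<close>

lemma mpow_nonneg:
  assumes st: "stochastic G P" and c: "c \<in> G"
  shows "mpow G P n c b \<ge> 0"
  using c
proof (induction n arbitrary: c)
  case (Suc n)
  have "\<forall>w\<in>G. P c w \<ge> 0" using st Suc.prems unfolding stochastic_def by auto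
  thus ?case using Suc by (auto intro!: sum_nonneg)
qed simp

lemma mpow_Suc_pos_first_step:
  assumes st: "stochastic G P" and a: "a \<in> G" and pos: "mpow G P (Suc n) a b > 0"
  shows "\<exists>c\<in>G. P a c > 0 \<and> mpow G P n c b > 0"
proof (rule ccontr)
  assume "\<not> ?thesis"
  moreover have "\<forall>c\<in>G. P a c \<ge> 0 \<and> mpow G P n c b \<ge> 0"
    using st a mpow_nonneg[OF st] unfolding stochastic_def by auto
  ultimately have "\<forall>c\<in>G. P a c = 0 \<or> mpow G P n c b = 0" by force
  hence "mpow G P (Suc n) a b = 0" by (simp add: sum.neutral)
  thus False using pos by simp
qed

lemma irreducible_propagate:
  assumes st: "stochastic G P" and irr: "irreducible_chain G P"
    and closed: "\<And>a c. a \<in> G \<Longrightarrow> c \<in> G \<Longrightarrow> Q a \<Longrightarrow> P a c > 0 \<Longrightarrow> Q c"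
    and a: "a \<in> G" "Q a" and b: "b \<in> G"
  shows "Q b"
proof -
  have "Q b" if "a \<in> G" "Q a" "mpow G P n a b > 0" for n a
    using that
  proof (induction n arbitrary: a)
    case 0 thus ?case by (simp split: if_splits)
  next
    case (Suc n)
    obtain c where "c \<in> G" "P a c > 0" "mpow G P n c b > 0"
      using mpow_Suc_pos_first_step[OF st Suc.prems(1,3)] by blast
    thus ?case using Suc closed by blast
  qed
  moreover obtain n where "mpow G P n a b > 0" using irr a b unfolding irreducible_chain_def by blast
  ultimately show ?thesis using a by blast
qed

lemma reversible_measure_pos:
  assumes st: "stochastic G P" and irr: "irreducible_chain G P" and rv: "reversible_chain G P \<pi>"
    and u: "u \<in> G"
  shows "\<pi> u > 0"
proof -
  have pi0: "\<forall>u\<in>G. \<pi> u \<ge> 0" and sum1: "(\<Sum>u\<in>G. \<pi> u) = 1"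
    and db: "\<forall>u\<in>G. \<forall>w\<in>G. \<pi> u * P u w = \<pi> w * P w u"
    using rv unfolding reversible_chain_def by auto
  obtain a where a: "a \<in> G" "\<pi> a > 0"
    using sum1 pi0 by (metis less_eq_real_def sum.neutral zero_neq_one)
  have "\<pi> c > 0" if "a \<in> G" "c \<in> G" "\<pi> a > 0" "P a c > 0" for a c
  proof -
    have "\<pi> c * P c a = \<pi> a * P a c" using db that by metis
    also have "\<dots> > 0" using that by simp
    finally show ?thesis using pi0 that(2) by (metis less_eq_real_def mult_zero_left)
  qed
  thus ?thesis using irreducible_propagate[OF st irr, where Q="\<lambda>u. \<pi> u > 0"] a u by blast
qed

text \<open>Maximum principle: harmonic functions of an irreducible chain are constant.\<close>
lemma harmonic_const:
  assumes fin: "finite G" and st: "stochastic G P" and irr: "irreducible_chain G P"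
    and harm: "\<forall>u\<in>G. Papply G P f u = f u" and u: "u \<in> G" and w: "w \<in> G"
  shows "f u = f w"
proof -
  define M where "M = Max (f ` G)"
  have le: "\<And>v. v \<in> G \<Longrightarrow> f v \<le> M" unfolding M_def using fin by auto
  have "M \<in> f ` G" unfolding M_def using fin u by (intro Max_in) auto
  then obtain z where z: "z \<in> G" "f z = M" by auto
  have "f c = M" if v: "v \<in> G" "c \<in> G" "f v = M" "P v c > 0" for v c
  proof -
    have "(\<Sum>c\<in>G. P v c * (M - f c)) = M * (\<Sum>c\<in>G. P v c) - Papply G P f v"
      by (simp add: Papply_def algebra_simps sum_subtractf sum_distrib_left)
    also have "\<dots> = 0" using st harm v unfolding stochastic_def by auto
    finally have "\<forall>c\<in>G. P v c * (M - f c) = 0"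
      using fin st v le by (subst sum_nonneg_eq_0_iff[symmetric]) (auto simp: stochastic_def)
    thus ?thesis using v by auto
  qed
  hence "\<And>b. b \<in> G \<Longrightarrow> f b = M"
    using irreducible_propagate[OF st irr, where Q="\<lambda>b. f b = M"] z by blast
  thus ?thesis using u w by simp
qed

lemma reversible_stationary:
  assumes stoch: "\<forall>u\<in>G. (\<Sum>w\<in>G. P u w) = 1"
    and db: "\<forall>u\<in>G. \<forall>w\<in>G. \<pi> u * P u w = \<pi> w * P w u"
  shows "(\<Sum>u\<in>G. \<pi> u * Papply G P f u) = (\<Sum>u\<in>G. \<pi> u * f u)"
proof -
  have "(\<Sum>u\<in>G. \<pi> u * Papply G P f u) = (\<Sum>u\<in>G. \<Sum>w\<in>G. \<pi> w * P w u * f w)"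
    unfolding Papply_def sum_distrib_left using db by (intro sum.cong refl) (simp add: mult.assoc)
  also have "\<dots> = (\<Sum>w\<in>G. \<pi> w * f w * (\<Sum>u\<in>G. P w u))"
    by (subst sum.swap) (simp add: sum_distrib_left algebra_simps)
  also have "\<dots> = (\<Sum>u\<in>G. \<pi> u * f u)" using stoch by simp
  finally show ?thesis .
qed


section \<open>The pi-weighted inner product and the Dirichlet form\<close>

definition pi_inner :: "nat set \<Rightarrow> (nat \<Rightarrow> real) \<Rightarrow> (nat \<Rightarrow> real) \<Rightarrow> (nat \<Rightarrow> real) \<Rightarrow> real" where
  "pi_inner G \<pi> a b = (\<Sum>u\<in>G. \<pi> u * a u * b u)"

definition pi_form :: "nat set \<Rightarrow> (nat \<Rightarrow> nat \<Rightarrow> real) \<Rightarrow> (nat \<Rightarrow> real) \<Rightarrow>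
    (nat \<Rightarrow> real) \<Rightarrow> (nat \<Rightarrow> real) \<Rightarrow> real" where
  "pi_form G P \<pi> a b = (\<Sum>u\<in>G. \<Sum>w\<in>G. \<pi> u * P u w * a u * b w)"

definition dirichlet :: "nat set \<Rightarrow> (nat \<Rightarrow> nat \<Rightarrow> real) \<Rightarrow> (nat \<Rightarrow> real) \<Rightarrow> (nat \<Rightarrow> real) \<Rightarrow> real" where
  "dirichlet G P \<pi> f = pi_inner G \<pi> f f - pi_form G P \<pi> f f"

definition scale_on :: "nat set \<Rightarrow> real \<Rightarrow> (nat \<Rightarrow> real) \<Rightarrow> nat \<Rightarrow> real" where
  "scale_on G c a = (\<lambda>i. if i \<in> G then c * a i else 0)"

lemma pi_inner_sym: "pi_inner G \<pi> a b = pi_inner G \<pi> b a"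
  unfolding pi_inner_def by (simp add: algebra_simps)

lemma pi_inner_add_scaled:
  "pi_inner G \<pi> (\<lambda>i. a i + t * b i) c = pi_inner G \<pi> a c + t * pi_inner G \<pi> b c"
  "pi_inner G \<pi> c (\<lambda>i. a i + t * b i) = pi_inner G \<pi> c a + t * pi_inner G \<pi> c b"
  unfolding pi_inner_def by (simp_all add: algebra_simps sum.distrib sum_distrib_left)

lemma pi_form_add_scaled:
  "pi_form G P \<pi> (\<lambda>i. a i + t * b i) c = pi_form G P \<pi> a c + t * pi_form G P \<pi> b c"
  "pi_form G P \<pi> c (\<lambda>i. a i + t * b i) = pi_form G P \<pi> c a + t * pi_form G P \<pi> c b"
  unfolding pi_form_def by (simp_all add: algebra_simps sum.distrib sum_distrib_left)

lemma scale_on_forms: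
  "pi_inner G \<pi> (scale_on G c a) d = c * pi_inner G \<pi> a d"
  "pi_inner G \<pi> d (scale_on G c a) = c * pi_inner G \<pi> d a"
  "pi_form G P \<pi> (scale_on G c a) d = c * pi_form G P \<pi> a d"
  "pi_form G P \<pi> d (scale_on G c a) = c * pi_form G P \<pi> d a"
  unfolding pi_inner_def pi_form_def scale_on_def by (simp_all add: algebra_simps sum_distrib_left)

lemma pi_form_Papply: "pi_form G P \<pi> a b = pi_inner G \<pi> a (Papply G P b)"
  unfolding pi_form_def pi_inner_def Papply_def by (simp add: algebra_simps sum_distrib_left)

lemma pi_form_sym:
  assumes db: "\<forall>u\<in>G. \<forall>w\<in>G. \<pi> u * P u w = \<pi> w * P w u"
  shows "pi_form G P \<pi> a b = pi_form G P \<pi> b a"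
proof -
  have "pi_form G P \<pi> a b = (\<Sum>u\<in>G. \<Sum>w\<in>G. \<pi> w * P w u * b w * a u)"
    unfolding pi_form_def using db by (intro sum.cong refl) (simp add: algebra_simps)
  also have "\<dots> = pi_form G P \<pi> b a" unfolding pi_form_def by (rule sum.swap)
  finally show ?thesis .
qed

lemma pi_inner_self_nonneg:
  assumes "\<forall>u\<in>G. \<pi> u \<ge> 0" shows "pi_inner G \<pi> a a \<ge> 0"
  unfolding pi_inner_def using assms by (intro sum_nonneg) (simp add: mult.assoc)

lemma pi_inner_self_eq_0:
  assumes fin: "finite G" and pos: "\<forall>u\<in>G. \<pi> u > 0" and z: "pi_inner G \<pi> a a = 0"
    and u: "u \<in> G"
  shows "a u = 0"
proof -
  have "\<forall>u\<in>G. \<pi> u * (a u * a u) = 0"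
    using z fin pos unfolding pi_inner_def
    by (subst sum_nonneg_eq_0_iff[symmetric]) (auto simp: mult.assoc)
  thus ?thesis using u pos by fastforce
qed

lemma pi_inner_self_ge_two_points:
  assumes fin: "finite G" and nonneg: "\<forall>u\<in>G. \<pi> u \<ge> 0"
    and x: "x \<in> G" and y: "y \<in> G" and xy: "x \<noteq> y"
  shows "\<pi> x * f x * f x + \<pi> y * f y * f y \<le> pi_inner G \<pi> f f"
proof -
  have "(\<Sum>u\<in>{x,y}. \<pi> u * f u * f u) \<le> pi_inner G \<pi> f f"
    unfolding pi_inner_def using x y nonneg
    by (intro sum_mono2[OF fin]) (auto simp: mult.assoc)
  thus ?thesis using xy by simp
qed

lemma dirichlet_local_sum:
  "dirichlet G P \<pi> f = (\<Sum>u\<in>G. \<pi> u * f u * (f u - Papply G P f u))"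
  unfolding dirichlet_def pi_form_Papply pi_inner_def
  by (simp add: algebra_simps sum_subtractf)

lemma dirichlet_add_const:
  assumes stoch: "\<forall>u\<in>G. (\<Sum>w\<in>G. P u w) = 1"
    and db: "\<forall>u\<in>G. \<forall>w\<in>G. \<pi> u * P u w = \<pi> w * P w u"
  shows "dirichlet G P \<pi> (\<lambda>u. f u + c) = dirichlet G P \<pi> f"
proof -
  have shift: "Papply G P (\<lambda>u. f u + c) u = Papply G P f u + c" if "u \<in> G" for u
    using stoch that by (simp add: Papply_def algebra_simps sum.distrib sum_distrib_left[symmetric])
  have "dirichlet G P \<pi> (\<lambda>u. f u + c) =
      dirichlet G P \<pi> f + c * ((\<Sum>u\<in>G. \<pi> u * f u) - (\<Sum>u\<in>G. \<pi> u * Papply G P f u))"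
    unfolding dirichlet_local_sum using shift
    by (simp add: algebra_simps sum.distrib sum_subtractf sum_distrib_left)
  also have "\<dots> = dirichlet G P \<pi> f" using reversible_stationary[OF stoch db] by simp
  finally show ?thesis .
qed

lemma dirichlet_two_point_harmonic:
  assumes fin: "finite G" and x: "x \<in> G" and fy: "f y = 0"
    and harm: "\<forall>u\<in>G. u \<noteq> x \<longrightarrow> u \<noteq> y \<longrightarrow> Papply G P f u = f u"
  shows "dirichlet G P \<pi> f = \<pi> x * f x * (f x - Papply G P f x)"
proof -
  have rest: "(\<Sum>u\<in>G - {x}. \<pi> u * f u * (f u - Papply G P f u)) = 0"
    using harm fy by (intro sum.neutral) auto
  show ?thesis unfolding dirichlet_local_sum by (subst sum.remove[OF fin x]) (simp add: rest)
qed


section \<open>The Poincare inequality\<close>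

text \<open>Functions of unit L^2(pi)-norm orthogonal to the constants, supported on G so that
  this sphere is compact.\<close>
definition centred_sphere :: "nat set \<Rightarrow> (nat \<Rightarrow> real) \<Rightarrow> (nat \<Rightarrow> real) set" where
  "centred_sphere G \<pi> = {a. (\<forall>i. i \<notin> G \<longrightarrow> a i = 0) \<and> pi_inner G \<pi> a a = 1 \<and>
     pi_inner G \<pi> a (\<lambda>_. 1) = 0}"

lemma coordinate_continuous [continuous_intros]: "continuous_on S (\<lambda>x::nat\<Rightarrow>real. x i)"
  by (rule continuous_on_subset[OF continuous_on_product_coordinates]) simp

lemma rayleigh_max_exists:
  assumes fin: "finite G" and pos: "\<forall>u\<in>G. \<pi> u > 0" and ne: "centred_sphere G \<pi> \<noteq> {}"
  shows "\<exists>a\<in>centred_sphere G \<pi>. \<forall>b\<in>centred_sphere G \<pi>. pi_form G P \<pi> b b \<le> pi_form G P \<pi> a a"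
proof -
  define S where "S = (\<lambda>i. if i \<in> G then {-(1 + 1/\<pi> i)..1 + 1/\<pi> i} else {0::real})"
  have "compactin (product_topology (\<lambda>i. euclideanreal) UNIV) (PiE UNIV S)"
    by (subst compactin_PiE) (auto simp: S_def)
  hence box: "compact (Pi UNIV S)" by (simp add: PiE_UNIV_domain euclidean_product_topology)
  have "a i \<in> S i" if a: "a \<in> centred_sphere G \<pi>" for a i
  proof (cases "i \<in> G")
    case True
    have "\<pi> i * (a i * a i) \<le> pi_inner G \<pi> a a"
      unfolding pi_inner_def using True pos fin
      by (subst mult.assoc[symmetric], intro member_le_sum) (auto simp: mult.assoc)
    hence "a i * a i \<le> 1 / \<pi> i" using a pos True by (simp add: centred_sphere_def field_simps)
    moreover have "\<bar>a i\<bar> \<le> 1 + a i * a i"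
    proof -
      have "0 \<le> (\<bar>a i\<bar> - 1) * (\<bar>a i\<bar> - 1)" by simp
      hence "0 \<le> a i * a i - 2 * \<bar>a i\<bar> + 1" by (simp add: algebra_simps)
      thus ?thesis using zero_le_square[of "a i"] by linarith
    qed
    ultimately show ?thesis using True unfolding S_def by auto
  next
    case False thus ?thesis using a unfolding S_def centred_sphere_def by auto
  qed
  hence sub: "centred_sphere G \<pi> \<subseteq> Pi UNIV S" by auto
  have "closed (centred_sphere G \<pi>)" unfolding centred_sphere_def pi_inner_def
  proof (intro closed_Collect_conj closed_Collect_all)
    fix i show "closed {x::nat\<Rightarrow>real. i \<notin> G \<longrightarrow> x i = 0}"
      by (cases "i \<in> G") (simp_all add: closed_Collect_eq continuous_intros)
  qed (intro closed_Collect_eq continuous_intros)+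
  hence "compact (centred_sphere G \<pi>)" using compact_Int_closed[OF box] sub by (metis inf.absorb_iff2)
  moreover have "continuous_on (centred_sphere G \<pi>) (\<lambda>a. pi_form G P \<pi> a a)"
    unfolding pi_form_def by (intro continuous_intros)
  ultimately show ?thesis using continuous_attains_sup[OF _ ne] by blast
qed

lemma normalise_into_sphere:
  assumes b1: "pi_inner G \<pi> b (\<lambda>_. 1) = 0" and bpos: "pi_inner G \<pi> b b > 0"
  defines "b' \<equiv> scale_on G (1 / sqrt (pi_inner G \<pi> b b)) b"
  shows "b' \<in> centred_sphere G \<pi>"
    and "pi_form G P \<pi> b' b' = pi_form G P \<pi> b b / pi_inner G \<pi> b b"
proof -
  have "sqrt (pi_inner G \<pi> b b) * sqrt (pi_inner G \<pi> b b) = pi_inner G \<pi> b b"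
    using bpos by simp
  hence "pi_inner G \<pi> b' b' = 1"
    unfolding b'_def scale_on_forms using bpos by (simp add: field_simps)
  moreover have "pi_inner G \<pi> b' (\<lambda>_. 1) = 0" unfolding b'_def scale_on_forms b1 by simp
  ultimately show "b' \<in> centred_sphere G \<pi>"
    unfolding centred_sphere_def b'_def by (simp add: scale_on_def)
  show "pi_form G P \<pi> b' b' = pi_form G P \<pi> b b / pi_inner G \<pi> b b"
    unfolding b'_def scale_on_forms using bpos by (simp add: field_simps)
qed

lemma rayleigh_max_bound:
  assumes fin: "finite G" and pos: "\<forall>u\<in>G. \<pi> u > 0"
    and amax: "\<forall>c\<in>centred_sphere G \<pi>. pi_form G P \<pi> c c \<le> pi_form G P \<pi> a a"
    and b1: "pi_inner G \<pi> b (\<lambda>_. 1) = 0"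
  shows "pi_form G P \<pi> b b \<le> pi_form G P \<pi> a a * pi_inner G \<pi> b b"
proof (cases "pi_inner G \<pi> b b > 0")
  case True
  hence "pi_form G P \<pi> b b / pi_inner G \<pi> b b \<le> pi_form G P \<pi> a a"
    using amax normalise_into_sphere[OF b1 True] by metis
  thus ?thesis using True by (simp add: field_simps)
next
  case False
  hence "pi_inner G \<pi> b b = 0" using pi_inner_self_nonneg[of G \<pi> b] pos by force
  hence "\<forall>u\<in>G. b u = 0" using pi_inner_self_eq_0[OF fin pos] by blast
  thus ?thesis by (simp add: pi_form_def \<open>pi_inner G \<pi> b b = 0\<close>)
qed

lemma rayleigh_first_variation:
  assumes db: "\<forall>u\<in>G. \<forall>w\<in>G. \<pi> u * P u w = \<pi> w * P w u"
    and bound: "\<And>b. pi_inner G \<pi> b (\<lambda>_. 1) = 0 \<Longrightarrow> pi_form G P \<pi> b b \<le> \<mu> * pi_inner G \<pi> b b"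
    and a1: "pi_inner G \<pi> a a = 1" and a0: "pi_inner G \<pi> a (\<lambda>_. 1) = 0"
    and amu: "pi_form G P \<pi> a a = \<mu>" and b0: "pi_inner G \<pi> b (\<lambda>_. 1) = 0"
  shows "pi_form G P \<pi> a b = \<mu> * pi_inner G \<pi> a b"
proof -
  define \<beta> where "\<beta> = \<mu> * pi_inner G \<pi> a b - pi_form G P \<pi> a b"
  define Q where "Q = \<mu> * pi_inner G \<pi> b b - pi_form G P \<pi> b b"
  have Q0: "Q \<ge> 0" using bound[OF b0] unfolding Q_def by simp
  text \<open>Perturb a in direction b by the step t chosen so that the bound is violated
    unless beta = 0.\<close>
  define t where "t = - \<beta> / (Q + 1)"
  have \<beta>_t: "\<beta> = - t * (Q + 1)" unfolding t_def using Q0 by (simp add: field_simps)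
  define z where "z = (\<lambda>i. a i + t * b i)"
  have "pi_inner G \<pi> z (\<lambda>_. 1) = 0" unfolding z_def using a0 b0 by (simp add: pi_inner_add_scaled)
  hence "pi_form G P \<pi> z z \<le> \<mu> * pi_inner G \<pi> z z" by (rule bound)
  moreover have "pi_form G P \<pi> z z = \<mu> + 2 * t * pi_form G P \<pi> a b + t * t * pi_form G P \<pi> b b"
    unfolding z_def using amu pi_form_sym[OF db, of a b]
    by (simp add: pi_form_add_scaled algebra_simps)
  moreover have "pi_inner G \<pi> z z = 1 + 2 * t * pi_inner G \<pi> a b + t * t * pi_inner G \<pi> b b"
    unfolding z_def using a1 pi_inner_sym[of G \<pi> a b]
    by (simp add: pi_inner_add_scaled algebra_simps)
  ultimately have "0 \<le> 2 * t * \<beta> + t * t * Q" unfolding \<beta>_def Q_def by (simp add: algebra_simps)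
  hence "0 \<le> - (t * t) * (Q + 2)" unfolding \<beta>_t by (simp add: algebra_simps)
  moreover have "0 < Q + 2" using Q0 by simp
  ultimately have "t * t \<le> 0" by (simp add: mult_le_0_iff)
  hence "t = 0" using zero_le_square[of t] by simp
  thus ?thesis using \<beta>_t unfolding \<beta>_def by simp
qed

lemma rayleigh_maximiser_eigenfunction:
  assumes fin: "finite G" and pos: "\<forall>u\<in>G. \<pi> u > 0"
    and stoch: "\<forall>u\<in>G. (\<Sum>w\<in>G. P u w) = 1"
    and db: "\<forall>u\<in>G. \<forall>w\<in>G. \<pi> u * P u w = \<pi> w * P w u"
    and bound: "\<And>b. pi_inner G \<pi> b (\<lambda>_. 1) = 0 \<Longrightarrow> pi_form G P \<pi> b b \<le> \<mu> * pi_inner G \<pi> b b"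
    and a1: "pi_inner G \<pi> a a = 1" and a0: "pi_inner G \<pi> a (\<lambda>_. 1) = 0"
    and amu: "pi_form G P \<pi> a a = \<mu>"
  shows "\<forall>u\<in>G. Papply G P a u = \<mu> * a u"
proof -
  define r where "r = (\<lambda>u. \<mu> * a u - Papply G P a u)"
  have r_inner: "pi_inner G \<pi> r b = \<mu> * pi_inner G \<pi> a b - pi_form G P \<pi> a b" for b
  proof -
    have "pi_form G P \<pi> a b = pi_inner G \<pi> (Papply G P a) b"
      using pi_form_sym[OF db, of a b] by (simp add: pi_form_Papply pi_inner_sym)
    thus ?thesis unfolding r_def pi_inner_def
      by (simp add: algebra_simps sum_subtractf sum_distrib_left)
  qed
  have "pi_form G P \<pi> a (\<lambda>_. 1) = pi_inner G \<pi> a (\<lambda>_. 1)"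
    unfolding pi_form_Papply pi_inner_def Papply_def using stoch by simp
  hence "pi_inner G \<pi> r (\<lambda>_. 1) = 0" using r_inner a0 by simp
  hence "pi_inner G \<pi> r r = 0"
    using r_inner rayleigh_first_variation[OF db bound a1 a0 amu] by simp
  thus ?thesis using pi_inner_self_eq_0[OF fin pos] unfolding r_def by fastforce
qed

text \<open>A nonzero eigenfunction orthogonal to the constants cannot have eigenvalue 1, since
  harmonic functions are constant.\<close>
lemma centred_eigenvalue_ne_1:
  assumes fin: "finite G" and st: "stochastic G P" and irr: "irreducible_chain G P"
    and sum1: "(\<Sum>u\<in>G. \<pi> u) = 1" and eig: "\<forall>u\<in>G. Papply G P a u = \<mu> * a u"
    and a0: "pi_inner G \<pi> a (\<lambda>_. 1) = 0" and u0: "u0 \<in> G" "a u0 \<noteq> 0"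
  shows "\<mu> \<noteq> 1"
proof
  assume "\<mu> = 1"
  hence "\<And>u. u \<in> G \<Longrightarrow> a u = a u0" using harmonic_const[OF fin st irr] eig u0 by simp
  hence "pi_inner G \<pi> a (\<lambda>_. 1) = (\<Sum>u\<in>G. \<pi> u) * a u0"
    unfolding pi_inner_def sum_distrib_right by simp
  thus False using a0 u0 sum1 by simp
qed

text \<open>A maximiser of the form on the centred sphere is a real eigenfunction whose eigenvalue is
  not 1 (harmonic functions are constant), hence is bounded by lambda.\<close>
lemma poincare:
  assumes fin: "finite G" and st: "stochastic G P" and irr: "irreducible_chain G P"
    and rv: "reversible_chain G P \<pi>" and f1: "pi_inner G \<pi> f (\<lambda>_. 1) = 0"
  shows "pi_form G P \<pi> f f \<le> slem G P * pi_inner G \<pi> f f"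
proof (rule ccontr)
  assume contra: "\<not> ?thesis"
  have pos: "\<forall>u\<in>G. \<pi> u > 0" using reversible_measure_pos[OF st irr rv] by blast
  have db: "\<forall>u\<in>G. \<forall>w\<in>G. \<pi> u * P u w = \<pi> w * P w u" and sum1: "(\<Sum>u\<in>G. \<pi> u) = 1"
    using rv unfolding reversible_chain_def by auto
  have stoch: "\<forall>u\<in>G. (\<Sum>w\<in>G. P u w) = 1" using st unfolding stochastic_def by auto
  have "pi_inner G \<pi> f f \<noteq> 0"
    using contra pi_inner_self_eq_0[OF fin pos] by (force simp: pi_form_def)
  hence fpos: "pi_inner G \<pi> f f > 0" using pi_inner_self_nonneg[of G \<pi> f] pos by force
  obtain a where a: "a \<in> centred_sphere G \<pi>"
    and amax: "\<forall>b\<in>centred_sphere G \<pi>. pi_form G P \<pi> b b \<le> pi_form G P \<pi> a a"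
    using rayleigh_max_exists[OF fin pos] normalise_into_sphere[OF f1 fpos] by blast
  define \<mu> where "\<mu> = pi_form G P \<pi> a a"
  have a1: "pi_inner G \<pi> a a = 1" and a0: "pi_inner G \<pi> a (\<lambda>_. 1) = 0"
    using a unfolding centred_sphere_def by auto
  have "slem G P < pi_form G P \<pi> f f / pi_inner G \<pi> f f"
    using contra fpos by (simp add: field_simps)
  also have "\<dots> \<le> \<mu>" unfolding \<mu>_def using amax normalise_into_sphere[OF f1 fpos] by metis
  finally have slem_less: "slem G P < \<mu>" .
  have eig: "\<forall>u\<in>G. Papply G P a u = \<mu> * a u"
    using rayleigh_maximiser_eigenfunction[OF fin pos stoch db _ a1 a0 \<mu>_def[symmetric]]
      rayleigh_max_bound[OF fin pos amax] unfolding \<mu>_def by blast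
  have "\<exists>u0\<in>G. a u0 \<noteq> 0"
  proof (rule ccontr)
    assume "\<not> ?thesis"
    hence "pi_inner G \<pi> a a = 0" unfolding pi_inner_def by simp
    thus False using a1 by simp
  qed
  then obtain u0 where u0: "u0 \<in> G" "a u0 \<noteq> 0" by blast
  have "\<mu> \<noteq> 1" using centred_eigenvalue_ne_1[OF fin st irr sum1 eig a0 u0] .
  thus False using real_eigenvalue_le_slem[OF fin u0 eig] slem_less by simp
qed


section \<open>The escape potential\<close>

text \<open>h(z) = Pr_z[T_y < T_x], the series of the probabilities of reaching y at time n while
  avoiding x and y before.\<close>
definition escape_potential :: "nat set \<Rightarrow> (nat \<Rightarrow> nat \<Rightarrow> real) \<Rightarrow> nat \<Rightarrow> nat \<Rightarrow> nat \<Rightarrow> real" where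
  "escape_potential G P x y z = (\<Sum>n. hit_avoid G P x y n z)"

lemma hit_avoid_nonneg:
  assumes st: "stochastic G P" and z: "z \<in> G"
  shows "hit_avoid G P x y n z \<ge> 0"
  using z
proof (induction n arbitrary: z)
  case (Suc n)
  have "\<forall>w\<in>G. P z w \<ge> 0" using st Suc.prems unfolding stochastic_def by auto
  thus ?case using Suc by (auto intro!: sum_nonneg)
qed simp

text \<open>The events counted by hit_avoid at different times are disjoint, so their total
  probability is at most one.\<close>
lemma hit_avoid_partial_sum_le_1:
  assumes st: "stochastic G P" and xy: "x \<noteq> y" and z: "z \<in> G"
  shows "(\<Sum>n<N. hit_avoid G P x y n z) \<le> 1"
  using z
proof (induction N arbitrary: z)
  case (Suc N)
  have split: "(\<Sum>n<Suc N. hit_avoid G P x y n z) =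
      hit_avoid G P x y 0 z + (\<Sum>n<N. hit_avoid G P x y (Suc n) z)"
    by (rule sum.lessThan_Suc_shift)
  show ?case
  proof (cases "z = x \<or> z = y")
    case True
    thus ?thesis unfolding split using xy by auto
  next
    case False
    have "(\<Sum>n<N. hit_avoid G P x y (Suc n) z) = (\<Sum>w\<in>G. P z w * (\<Sum>n<N. hit_avoid G P x y n w))"
      using False by (simp add: sum.swap[of _ "{..<N}"] sum_distrib_left)
    also have "\<dots> \<le> (\<Sum>w\<in>G. P z w * 1)"
      using st Suc unfolding stochastic_def by (intro sum_mono mult_left_mono) auto
    also have "\<dots> = 1" using st Suc.prems unfolding stochastic_def by auto
    finally show ?thesis unfolding split using False by simp
  qed
qed simp

lemma hit_avoid_summable:
  assumes st: "stochastic G P" and xy: "x \<noteq> y" and z: "z \<in> G"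
  shows "summable (\<lambda>n. hit_avoid G P x y n z)"
proof (rule bounded_imp_summable)
  show "\<And>n. 0 \<le> hit_avoid G P x y n z" using hit_avoid_nonneg[OF st z] .
  show "(\<Sum>k\<le>n. hit_avoid G P x y k z) \<le> 1" for n
    using hit_avoid_partial_sum_le_1[OF st xy z, of "Suc n"] by (simp add: lessThan_Suc_atMost)
qed

lemma escape_potential_nonneg:
  assumes st: "stochastic G P" and xy: "x \<noteq> y" and z: "z \<in> G"
  shows "escape_potential G P x y z \<ge> 0"
  unfolding escape_potential_def
  by (rule suminf_nonneg[OF hit_avoid_summable[OF st xy z] hit_avoid_nonneg[OF st z]])

lemma escape_potential_at_start:
  assumes xy: "x \<noteq> y"
  shows "escape_potential G P x y x = 0"
proof -
  have "hit_avoid G P x y n x = 0" for n using xy by (cases n) auto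
  thus ?thesis unfolding escape_potential_def by simp
qed

lemma escape_potential_at_target:
  assumes st: "stochastic G P" and xy: "x \<noteq> y" and y: "y \<in> G"
  shows "escape_potential G P x y y = 1"
  using suminf_split_head[OF hit_avoid_summable[OF st xy y]]
  unfolding escape_potential_def by simp

lemma Papply_escape_potential:
  assumes st: "stochastic G P" and xy: "x \<noteq> y"
  shows "Papply G P (escape_potential G P x y) z = (\<Sum>n. \<Sum>w\<in>G. P z w * hit_avoid G P x y n w)"
proof -
  note sm = hit_avoid_summable[OF st xy]
  have "(\<Sum>n. \<Sum>w\<in>G. P z w * hit_avoid G P x y n w) = (\<Sum>w\<in>G. \<Sum>n. P z w * hit_avoid G P x y n w)"
    by (rule suminf_sum) (intro summable_mult sm)
  also have "\<dots> = Papply G P (escape_potential G P x y) z"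
    unfolding Papply_def escape_potential_def by (intro sum.cong refl) (simp add: suminf_mult sm)
  finally show ?thesis ..
qed

lemma escape_prob_eq_Papply:
  assumes st: "stochastic G P" and xy: "x \<noteq> y"
  shows "escape_prob G P x y = Papply G P (escape_potential G P x y) x"
  unfolding escape_prob_def Papply_escape_potential[OF st xy] ..

lemma escape_potential_harmonic:
  assumes st: "stochastic G P" and xy: "x \<noteq> y" and z: "z \<in> G" "z \<noteq> x" "z \<noteq> y"
  shows "Papply G P (escape_potential G P x y) z = escape_potential G P x y z"
  using suminf_split_head[OF hit_avoid_summable[OF st xy z(1)]] z
  unfolding Papply_escape_potential[OF st xy] escape_potential_def by simp

section \<open>The escape estimate\<close>

text \<open>The Dirichlet form of g = 1 - h is pi(x) times the escape probability: g vanishes at y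
  and is harmonic off {x, y}, so only the term at x remains, and there g - P g = P h.\<close>
lemma dirichlet_escape_complement:
  assumes fin: "finite G" and st: "stochastic G P" and x: "x \<in> G" and y: "y \<in> G"
    and xy: "x \<noteq> y"
  shows "dirichlet G P \<pi> (\<lambda>u. 1 - escape_potential G P x y u) = \<pi> x * escape_prob G P x y"
proof -
  define h where "h = escape_potential G P x y"
  define g where "g = (\<lambda>u. 1 - h u)"
  have Pg: "Papply G P g u = 1 - Papply G P h u" if "u \<in> G" for u
    using st that by (simp add: stochastic_def Papply_def g_def algebra_simps sum_subtractf)
  have "dirichlet G P \<pi> g = \<pi> x * g x * (g x - Papply G P g x)"
    using Pg escape_potential_harmonic[OF st xy] escape_potential_at_target[OF st xy y]
    unfolding h_def g_def by (intro dirichlet_two_point_harmonic[OF fin x]) auto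
  thus ?thesis using Pg[OF x] escape_potential_at_start[OF xy] escape_prob_eq_Papply[OF st xy]
    unfolding g_def h_def by simp
qed

lemma escape_prob_nonneg:
  assumes st: "stochastic G P" and x: "x \<in> G" and xy: "x \<noteq> y"
  shows "escape_prob G P x y \<ge> 0"
  unfolding escape_prob_eq_Papply[OF st xy] Papply_def
  using st escape_potential_nonneg[OF st xy] x unfolding stochastic_def by (auto intro!: sum_nonneg)

text \<open>The contribution of two states to the variance of a function taking values 1 - m and -m
  there.\<close>
lemma two_point_variance_bound:
  fixes px py m :: real
  assumes px: "px > 0" and py: "py > 0"
  shows "px * py / (px + py) \<le> px * (1 - m) * (1 - m) + py * m * m"
proof -
  have "(px + py) * (px * (1 - m) * (1 - m) + py * m * m) - px * py =
      (px * (1 - m) - py * m) * (px * (1 - m) - py * m)"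
    by (simp add: algebra_simps)
  hence "px * py \<le> (px + py) * (px * (1 - m) * (1 - m) + py * m * m)"
    using zero_le_square[of "px * (1 - m) - py * m"] by linarith
  thus ?thesis using px py by (simp add: field_simps)
qed

text \<open>The Dirichlet form of g = 1 - h equals pi(x) times the
  escape probability; it bounds (1 - lambda) times the variance of g, which is at least
  pi(x) pi(y) / (pi(x) + pi(y)).\<close>
lemma escape_prob_lower_bound:
  assumes fin: "finite G" and st: "stochastic G P" and irr: "irreducible_chain G P"
    and rv: "reversible_chain G P \<pi>" and x: "x \<in> G" and y: "y \<in> G" and xy: "x \<noteq> y"
    and r: "0 \<le> r" "r \<le> \<pi> y / (\<pi> x + \<pi> y)"
  shows "(1 - slem G P) * r \<le> escape_prob G P x y"
proof -
  have pos: "\<forall>u\<in>G. \<pi> u > 0" using reversible_measure_pos[OF st irr rv] by blast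
  have db: "\<forall>u\<in>G. \<forall>w\<in>G. \<pi> u * P u w = \<pi> w * P w u" and sum1: "(\<Sum>u\<in>G. \<pi> u) = 1"
    using rv unfolding reversible_chain_def by auto
  have stoch: "\<forall>u\<in>G. (\<Sum>w\<in>G. P u w) = 1" using st unfolding stochastic_def by auto
  define g where "g = (\<lambda>u. 1 - escape_potential G P x y u)"
  define m where "m = pi_inner G \<pi> g (\<lambda>_. 1)"
  define f where "f = (\<lambda>u. g u + - m)"
  define e where "e = escape_prob G P x y"
  have gx: "g x = 1" and gy: "g y = 0"
    unfolding g_def using escape_potential_at_start escape_potential_at_target st xy y by auto
  have "pi_inner G \<pi> f (\<lambda>_. 1) = pi_inner G \<pi> g (\<lambda>_. 1) - m * (\<Sum>u\<in>G. \<pi> u)"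
    unfolding f_def pi_inner_def by (simp add: algebra_simps sum_subtractf sum_distrib_left)
  hence f_centred: "pi_inner G \<pi> f (\<lambda>_. 1) = 0" using sum1 unfolding m_def by simp
  have "(1 - slem G P) * pi_inner G \<pi> f f \<le> dirichlet G P \<pi> f"
    using poincare[OF fin st irr rv f_centred] unfolding dirichlet_def by (simp add: algebra_simps)
  also have "\<dots> = \<pi> x * e"
    unfolding f_def dirichlet_add_const[OF stoch db] g_def e_def
    by (rule dirichlet_escape_complement[OF fin st x y xy])
  finally have gap: "(1 - slem G P) * pi_inner G \<pi> f f \<le> \<pi> x * e" .
  have "\<pi> x * \<pi> y / (\<pi> x + \<pi> y) \<le> pi_inner G \<pi> f f"
    using two_point_variance_bound[of "\<pi> x" "\<pi> y" m] pos x y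
      pi_inner_self_ge_two_points[OF fin _ x y xy, of \<pi> f]
    unfolding f_def gx gy by (auto simp: less_imp_le)
  moreover have "\<pi> x * r \<le> \<pi> x * (\<pi> y / (\<pi> x + \<pi> y))"
    using mult_left_mono[OF r(2)] pos x by (simp add: less_imp_le del: times_divide_eq_right)
  ultimately have variance: "\<pi> x * r \<le> pi_inner G \<pi> f f" by simp
  show ?thesis
  proof (cases "0 \<le> 1 - slem G P")
    case True
    have "\<pi> x * ((1 - slem G P) * r) \<le> \<pi> x * e"
      using gap mult_left_mono[OF variance True] by (simp add: algebra_simps)
    thus ?thesis using pos x unfolding e_def by simp
  next
    case False
    hence "(1 - slem G P) * r \<le> 0" using r(1) by (simp add: mult_nonpos_nonneg)
    thus ?thesis using escape_prob_nonneg[OF st x xy] unfolding e_def by linarith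
  qed
qed

text \<open>The theorem, with c = 1/2: pi_min / (2 pi_max) <= pi(y) / (pi(x) + pi(y)).\<close>
theorem mainTheorem2:
  shows "\<exists>c>0. \<forall>(G::nat set) P \<pi>.
    finite G \<and> G \<noteq> {} \<and> stochastic G P \<and> irreducible_chain G P \<and> aperiodic_chain G P \<and>
    reversible_chain G P \<pi> \<longrightarrow>
    (\<forall>x\<in>G. \<forall>y\<in>G. x \<noteq> y \<longrightarrow>
       escape_prob G P x y \<ge> c * (1 - slem G P) * Min (\<pi> ` G) / Max (\<pi> ` G))"
proof (intro exI[of _ "1/2 :: real"] conjI allI impI ballI)
  fix G :: "nat set" and P \<pi> x y
  assume "finite G \<and> G \<noteq> {} \<and> stochastic G P \<and> irreducible_chain G P \<and> aperiodic_chain G P \<and>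
    reversible_chain G P \<pi>" and x: "x \<in> G" and y: "y \<in> G" and xy: "x \<noteq> y"
  hence fin: "finite G" and st: "stochastic G P" and irr: "irreducible_chain G P"
    and rv: "reversible_chain G P \<pi>" by auto
  have pos: "\<And>u. u \<in> G \<Longrightarrow> \<pi> u > 0" using reversible_measure_pos[OF st irr rv] by blast
  have "Min (\<pi> ` G) \<in> \<pi> ` G" using fin x by (intro Min_in) auto
  hence min: "0 < Min (\<pi> ` G)" "Min (\<pi> ` G) \<le> \<pi> y" using fin y pos by auto
  have max: "\<pi> x \<le> Max (\<pi> ` G)" "\<pi> y \<le> Max (\<pi> ` G)" using fin x y by auto
  have "Min (\<pi> ` G) / (2 * Max (\<pi> ` G)) \<le> \<pi> y / (\<pi> x + \<pi> y)"
    using min max pos[OF x] by (intro frac_le) auto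
  moreover have "0 \<le> Min (\<pi> ` G) / (2 * Max (\<pi> ` G))" using min max by simp
  ultimately have "(1 - slem G P) * (Min (\<pi> ` G) / (2 * Max (\<pi> ` G))) \<le> escape_prob G P x y"
    by (intro escape_prob_lower_bound[OF fin st irr rv x y xy])
  thus "1 / 2 * (1 - slem G P) * Min (\<pi> ` G) / Max (\<pi> ` G) \<le> escape_prob G P x y"
    by simp
qed simp

end
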